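(* Let $G=(V,E,s_0,s_1)$ be a switch graph and $o,d\in V$ with $o\neq d$. If $\textsc{Run}(G,o,d)$ does not terminate, then it reaches a dead end (i.e., at some point the current vertex $v$ of the run is a dead end).
   Context: A switch graph is a 4-tuple $G=(V,E,s_0,s_1)$ where $V$ is a finite vertex set, $s_0,s_1:V\to V$, and $E=\{(v,s_0(v)):v\in V\}\cup\{(v,s_1(v)):v\in V\}$ (loops allowed; possibly $s_0(v)=s_1(v)$). The procedure $\textsc{Run}(G,o,d)$: maintain arrays $\mathtt{s\_curr},\mathtt{s\_next}$ indexed by $V$, initially $\mathtt{s\_curr}[v]=s_0(v)$, $\mathtt{s\_next}[v]=s_1(v)$; set $v:=o$; while $v\neq d$: $w:=\mathtt{s\_curr}[v]$, swap $\mathtt{s\_curr}[v],\mathtt{s\_next}[v]$, $v:=w$ (traversing edge $(v,w)$). A dead end is a vertex from which there is no directed path to $d$ in the directed graph $(V,E)$. *)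

theory Defs
  imports Main
begin

definition switch_graph :: "'a set \<Rightarrow> ('a \<Rightarrow> 'a) \<Rightarrow> ('a \<Rightarrow> 'a) \<Rightarrow> bool" where
  "switch_graph V s0 s1 \<longleftrightarrow> finite V \<and> (\<forall>v\<in>V. s0 v \<in> V \<and> s1 v \<in> V)"

definition sg_edges :: "'a set \<Rightarrow> ('a \<Rightarrow> 'a) \<Rightarrow> ('a \<Rightarrow> 'a) \<Rightarrow> ('a \<times> 'a) set" where
  "sg_edges V s0 s1 = {(v, s0 v) | v. v \<in> V} \<union> {(v, s1 v) | v. v \<in> V}"

definition dead_end :: "'a set \<Rightarrow> ('a \<Rightarrow> 'a) \<Rightarrow> ('a \<Rightarrow> 'a) \<Rightarrow> 'a \<Rightarrow> 'a \<Rightarrow> bool" where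
  "dead_end V s0 s1 d v \<longleftrightarrow> (v, d) \<notin> (sg_edges V s0 s1)\<^sup>*"

text \<open>A state of Run: (current vertex, s_curr, s_next). One loop iteration.\<close>
definition run_step :: "'a \<times> ('a \<Rightarrow> 'a) \<times> ('a \<Rightarrow> 'a) \<Rightarrow> 'a \<times> ('a \<Rightarrow> 'a) \<times> ('a \<Rightarrow> 'a)" where
  "run_step st = (case st of (v, cur, nxt) \<Rightarrow> (cur v, cur(v := nxt v), nxt(v := cur v)))"

text \<open>State after n loop iterations, ignoring the termination test.\<close>
definition run_state :: "('a \<Rightarrow> 'a) \<Rightarrow> ('a \<Rightarrow> 'a) \<Rightarrow> 'a \<Rightarrow> nat \<Rightarrow> 'a \<times> ('a \<Rightarrow> 'a) \<times> ('a \<Rightarrow> 'a)" where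
  "run_state s0 s1 orig n = (run_step ^^ n) (orig, s0, s1)"

definition run_vertex :: "('a \<Rightarrow> 'a) \<Rightarrow> ('a \<Rightarrow> 'a) \<Rightarrow> 'a \<Rightarrow> nat \<Rightarrow> 'a" where
  "run_vertex s0 s1 orig n = fst (run_state s0 s1 orig n)"

definition run_terminates :: "('a \<Rightarrow> 'a) \<Rightarrow> ('a \<Rightarrow> 'a) \<Rightarrow> 'a \<Rightarrow> 'a \<Rightarrow> bool" where
  "run_terminates s0 s1 orig d \<longleftrightarrow> (\<exists>n. run_vertex s0 s1 orig n = d)"

end

theory Submission
  imports Defs "HOL-Library.Infinite_Set"
begin

text \<open>
  The run stays in the finite set V, so some vertex v is visited infinitely often.
  Between two consecutive visits of v its switch is untouched, so consecutive visits leave v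
  along different edges; hence both successors of v are visited infinitely often as well.
  Thus every vertex reachable from v is visited infinitely often, and if the run never
  reached a dead end, d would be reachable from v and so be visited, i.e. the run terminates.
\<close>

definition run_cur :: "('a \<Rightarrow> 'a) \<Rightarrow> ('a \<Rightarrow> 'a) \<Rightarrow> 'a \<Rightarrow> nat \<Rightarrow> 'a \<Rightarrow> 'a" where
  "run_cur s0 s1 orig n = fst (snd (run_state s0 s1 orig n))"

definition run_nxt :: "('a \<Rightarrow> 'a) \<Rightarrow> ('a \<Rightarrow> 'a) \<Rightarrow> 'a \<Rightarrow> nat \<Rightarrow> 'a \<Rightarrow> 'a" where
  "run_nxt s0 s1 orig n = snd (snd (run_state s0 s1 orig n))"

lemma run_state_0: "run_state s0 s1 orig 0 = (orig, s0, s1)"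
  by (simp add: run_state_def)

lemma run_state_Suc: "run_state s0 s1 orig (Suc n) = run_step (run_state s0 s1 orig n)"
  by (simp add: run_state_def)

lemma run_vertex_Suc:
  "run_vertex s0 s1 orig (Suc n) = run_cur s0 s1 orig n (run_vertex s0 s1 orig n)"
  by (cases "run_state s0 s1 orig n") (simp add: run_vertex_def run_cur_def run_state_Suc run_step_def)

lemma run_cur_Suc:
  "run_cur s0 s1 orig (Suc n) =
     (run_cur s0 s1 orig n)(run_vertex s0 s1 orig n := run_nxt s0 s1 orig n (run_vertex s0 s1 orig n))"
  by (cases "run_state s0 s1 orig n")
    (simp add: run_vertex_def run_cur_def run_nxt_def run_state_Suc run_step_def)

lemma run_nxt_Suc:
  "run_nxt s0 s1 orig (Suc n) =
     (run_nxt s0 s1 orig n)(run_vertex s0 s1 orig n := run_cur s0 s1 orig n (run_vertex s0 s1 orig n))"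
  by (cases "run_state s0 s1 orig n")
    (simp add: run_vertex_def run_cur_def run_nxt_def run_state_Suc run_step_def)

lemma run_switch_positions: "{run_cur s0 s1 orig n v, run_nxt s0 s1 orig n v} = {s0 v, s1 v}"
  by (induction n) (auto simp: run_cur_Suc run_nxt_Suc, simp_all add: run_cur_def run_nxt_def run_state_0)

lemma run_vertex_in:
  assumes "switch_graph V s0 s1" "orig \<in> V"
  shows "run_vertex s0 s1 orig n \<in> V"
proof (induction n)
  case 0
  show ?case using assms(2) by (simp add: run_vertex_def run_state_0)
next
  case (Suc n)
  have "run_vertex s0 s1 orig (Suc n) \<in> {s0 (run_vertex s0 s1 orig n), s1 (run_vertex s0 s1 orig n)}"
    using run_switch_positions by (metis insertI1 run_vertex_Suc)
  then show ?case using Suc assms(1) by (auto simp: switch_graph_def)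
qed

lemma run_cur_unvisited:
  assumes "\<And>k. a \<le> k \<Longrightarrow> k < b \<Longrightarrow> run_vertex s0 s1 orig k \<noteq> v" and "a \<le> b"
  shows "run_cur s0 s1 orig b v = run_cur s0 s1 orig a v"
  using assms
proof (induction b)
  case (Suc b)
  show ?case
  proof (cases "a = Suc b")
    case False
    then have "run_vertex s0 s1 orig b \<noteq> v" "run_cur s0 s1 orig b v = run_cur s0 s1 orig a v"
      using Suc by auto
    then show ?thesis by (simp add: run_cur_Suc)
  qed simp
qed simp

text \<open>The switch of v is flipped on leaving v and then untouched until the next visit.\<close>
lemma run_leaves_along_nxt_on_next_visit:
  assumes "run_vertex s0 s1 orig n = v" "n < m" "run_vertex s0 s1 orig m = v"
    and "\<And>k. n < k \<Longrightarrow> k < m \<Longrightarrow> run_vertex s0 s1 orig k \<noteq> v"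
  shows "run_vertex s0 s1 orig (Suc m) = run_nxt s0 s1 orig n v"
proof -
  have "run_cur s0 s1 orig m v = run_cur s0 s1 orig (Suc n) v"
    using assms(2,4) by (intro run_cur_unvisited) auto
  also have "\<dots> = run_nxt s0 s1 orig n v"
    using assms(1) by (simp add: run_cur_Suc)
  finally show ?thesis using assms(3) by (simp add: run_vertex_Suc)
qed

lemma run_visits_successors_frequently:
  assumes "\<exists>\<^sub>\<infinity>n. run_vertex s0 s1 orig n = v" and "w \<in> {s0 v, s1 v}"
  shows "\<exists>\<^sub>\<infinity>n. run_vertex s0 s1 orig n = w"
  unfolding INFM_nat_le
proof
  fix N
  let ?visit = "\<lambda>k. run_vertex s0 s1 orig k = v"
  obtain n where n: "n \<ge> N" "?visit n"
    using assms(1) by (auto simp: INFM_nat_le)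
  obtain m' where "n < m' \<and> ?visit m'"
    using assms(1) by (auto simp: INFM_nat)
  define m where "m = (LEAST k. n < k \<and> ?visit k)"
  have m: "n < m" "?visit m"
    using LeastI[of "\<lambda>k. n < k \<and> ?visit k", OF \<open>n < m' \<and> ?visit m'\<close>] by (auto simp: m_def)
  have "\<not> ?visit k" if "n < k" "k < m" for k
    using not_less_Least[of k "\<lambda>k. n < k \<and> ?visit k"] that by (auto simp: m_def)
  then have "run_vertex s0 s1 orig (Suc m) = run_nxt s0 s1 orig n v"
    using n(2) m by (intro run_leaves_along_nxt_on_next_visit) auto
  moreover have "run_vertex s0 s1 orig (Suc n) = run_cur s0 s1 orig n v"
    using n(2) by (simp add: run_vertex_Suc)
  ultimately have "w \<in> {run_vertex s0 s1 orig (Suc n), run_vertex s0 s1 orig (Suc m)}"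
    using assms(2) run_switch_positions[of s0 s1 orig n v] by simp
  then show "\<exists>k\<ge>N. run_vertex s0 s1 orig k = w"
    using n(1) m(1) by (metis insertE empty_iff le_SucI less_imp_le order.trans)
qed

lemma run_visits_reachable_frequently:
  assumes "\<exists>\<^sub>\<infinity>n. run_vertex s0 s1 orig n = v" and "(v, w) \<in> (sg_edges V s0 s1)\<^sup>*"
  shows "\<exists>\<^sub>\<infinity>n. run_vertex s0 s1 orig n = w"
  using assms(2)
proof (induction rule: rtrancl_induct)
  case (step y z)
  then show ?case using run_visits_successors_frequently[of s0 s1 orig y z]
    by (auto simp: sg_edges_def)
qed (fact assms(1))

lemma run_visits_some_vertex_frequently:
  assumes "switch_graph V s0 s1" "orig \<in> V"
  obtains v where "\<exists>\<^sub>\<infinity>n. run_vertex s0 s1 orig n = v"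
proof -
  have "finite V"
    using assms(1) by (simp add: switch_graph_def)
  moreover have "\<exists>\<^sub>\<infinity>n::nat. \<exists>v\<in>V. run_vertex s0 s1 orig n = v"
    using run_vertex_in[OF assms] by (auto simp: INFM_nat_le)
  ultimately have "\<exists>v\<in>V. \<exists>\<^sub>\<infinity>n. run_vertex s0 s1 orig n = v"
    by (rule INFM_finite_Bex_distrib[THEN iffD1])
  with that show ?thesis by blast
qed

theorem lemma3:
  fixes V :: "'a set" and s0 s1 :: "'a \<Rightarrow> 'a" and orig d :: 'a
  assumes "switch_graph V s0 s1" and "orig \<in> V" and "d \<in> V" and "orig \<noteq> d"
    and "\<not> run_terminates s0 s1 orig d"
  shows "\<exists>n. dead_end V s0 s1 d (run_vertex s0 s1 orig n)"
proof -
  obtain v where v_frequent: "\<exists>\<^sub>\<infinity>n. run_vertex s0 s1 orig n = v"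
    using run_visits_some_vertex_frequently[OF assms(1,2)] .
  then obtain n where "run_vertex s0 s1 orig n = v"
    by (rule INFM_E)
  moreover have "\<not> (\<exists>\<^sub>\<infinity>k. run_vertex s0 s1 orig k = d)"
    using assms(5) INFM_EX unfolding run_terminates_def by blast
  then have "(v, d) \<notin> (sg_edges V s0 s1)\<^sup>*"
    using run_visits_reachable_frequently[OF v_frequent] by blast
  ultimately show ?thesis
    unfolding dead_end_def by blast
qed

end
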